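(* Let $M$ be an oriented surface with a Riemannian metric, $A$ an $\mathfrak{su}(2)$-valued $1$-form on $M$, and $b:SM\to SU(2)$ smooth with $X(b)+Ab=0$ and finite Fourier expansion $b=\sum_{k=-N}^{N}b_k$ with $N\ge1$ and $b_{-N}\ne0$. Fix $\xi\in\mathbb{C}^2$. In local isothermal coordinates $(x,y)$ with metric $e^{2\lambda}(dx^2+dy^2)$ and the induced coordinates $(x,y,\theta)$ on $SM$, write $b_{-N}=h(x,y)e^{-iN\theta}$ and $A=A_x\,dx+A_y\,dy$, $A_{\bar z}=\tfrac12(A_x+iA_y)$. Then $$\bar\partial\big(e^{-N\lambda}h\xi\big)+A_{\bar z}\,e^{-N\lambda}h\xi=0,$$ i.e. the local section $e^{-N\lambda}h\xi\,(d\bar z)^N$ of $(M\times\mathbb{C}^2)\otimes K^{\otimes -N}$ is $\bar\partial_A$-holomorphic.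
   Context: $SM$ is the unit tangent bundle, $X$ the geodesic vector field, $V$ the vertical vector field; $A$ is regarded as the function $A(x,v)=A_x(v)$ on $SM$. $L^2(SM,\mathbb{M}_2(\mathbb{C}))=\bigoplus_{k\in\mathbb{Z}}H_k$ where $-iV$ acts as $k$ on $H_k$, and $b_k$ is the component of $b$ in $H_k$. $\theta$ is the angle between $v$ and $\partial/\partial x$, so $V=\partial/\partial\theta$. $\bar\partial=\tfrac12(\partial_x+i\partial_y)$, and $K$ is the canonical line bundle of $M$. *)

theory Defs
  imports "HOL-Analysis.Analysis"
begin

text \<open>C-infinity on an open set: all iterated partial derivatives (indexed by lists of
  basis directions) exist, with Frechet derivatives given by them.\<close>
definition smooth_on :: "'a::euclidean_space set \<Rightarrow> ('a \<Rightarrow> 'b::real_normed_vector) \<Rightarrow> bool" where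
  "smooth_on S f \<longleftrightarrow>
     (\<exists>F :: 'a list \<Rightarrow> 'a \<Rightarrow> 'b.
        (\<forall>x\<in>S. F [] x = f x) \<and>
        (\<forall>ds. \<forall>x\<in>S. (F ds has_derivative (\<lambda>v. \<Sum>i\<in>Basis. (v \<bullet> i) *\<^sub>R F (i # ds) x)) (at x)))"

definition cscale :: "complex \<Rightarrow> complex^'n \<Rightarrow> complex^'n" where
  "cscale c v = (\<chi> i. c * v $ i)"

definition cscaleM :: "complex \<Rightarrow> complex^'n^'m \<Rightarrow> complex^'n^'m" where
  "cscaleM c M = (\<chi> i j. c * M $ i $ j)"

definition cadj :: "complex^'n^'n \<Rightarrow> complex^'n^'n" where
  "cadj M = (\<chi> i j. cnj (M $ j $ i))"

definition SU2 :: "(complex^2^2) set" where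
  "SU2 = {B. cadj B ** B = mat 1 \<and> det B = 1}"

definition su2 :: "(complex^2^2) set" where
  "su2 = {A. cadj A = - A \<and> trace A = 0}"

definition pdx :: "(real \<times> real \<Rightarrow> 'b::real_normed_vector) \<Rightarrow> real \<times> real \<Rightarrow> 'b" where
  "pdx f p = frechet_derivative f (at p) (1, 0)"

definition pdy :: "(real \<times> real \<Rightarrow> 'b::real_normed_vector) \<Rightarrow> real \<times> real \<Rightarrow> 'b" where
  "pdy f p = frechet_derivative f (at p) (0, 1)"

definition pdX :: "((real \<times> real) \<times> real \<Rightarrow> 'b::real_normed_vector) \<Rightarrow> (real \<times> real) \<times> real \<Rightarrow> 'b" where
  "pdX f q = frechet_derivative f (at q) ((1, 0), 0)"

definition pdY :: "((real \<times> real) \<times> real \<Rightarrow> 'b::real_normed_vector) \<Rightarrow> (real \<times> real) \<times> real \<Rightarrow> 'b" where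
  "pdY f q = frechet_derivative f (at q) ((0, 1), 0)"

definition pdTheta :: "((real \<times> real) \<times> real \<Rightarrow> 'b::real_normed_vector) \<Rightarrow> (real \<times> real) \<times> real \<Rightarrow> 'b" where
  "pdTheta f q = frechet_derivative f (at q) ((0, 0), 1)"

text \<open>Geodesic vector field of the metric e^(2 lam)(dx^2+dy^2), in the coordinates
  (x,y,theta) where theta is the angle between v and d/dx:
  X = e^(-lam) (cos theta d_x + sin theta d_y + (- d_x lam sin theta + d_y lam cos theta) d_theta).\<close>
definition geoX :: "(real \<times> real \<Rightarrow> real) \<Rightarrow> ((real \<times> real) \<times> real \<Rightarrow> 'b::real_normed_vector)
                    \<Rightarrow> (real \<times> real) \<times> real \<Rightarrow> 'b" where
  "geoX lam f q = (case q of (p, \<theta>) \<Rightarrow>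
     exp (- lam p) *\<^sub>R (cos \<theta> *\<^sub>R pdX f q + sin \<theta> *\<^sub>R pdY f q
        + (- pdx lam p * sin \<theta> + pdy lam p * cos \<theta>) *\<^sub>R pdTheta f q))"

text \<open>The 1-form A = Ax dx + Ay dy regarded as a function on SM: A(x,v) = A_x(v),
  with the unit vector v = e^(-lam)(cos theta, sin theta).\<close>
definition A_SM :: "(real \<times> real \<Rightarrow> real) \<Rightarrow> (real \<times> real \<Rightarrow> complex^2^2) \<Rightarrow> (real \<times> real \<Rightarrow> complex^2^2)
                    \<Rightarrow> (real \<times> real) \<times> real \<Rightarrow> complex^2^2" where
  "A_SM lam Ax Ay q = (case q of (p, \<theta>) \<Rightarrow>
     exp (- lam p) *\<^sub>R (cos \<theta> *\<^sub>R Ax p + sin \<theta> *\<^sub>R Ay p))"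

definition dbar :: "(real \<times> real \<Rightarrow> complex^'n) \<Rightarrow> real \<times> real \<Rightarrow> complex^'n" where
  "dbar g p = (1/2) *\<^sub>R (pdx g p + cscale \<i> (pdy g p))"

definition A_zbar :: "(real \<times> real \<Rightarrow> complex^2^2) \<Rightarrow> (real \<times> real \<Rightarrow> complex^2^2) \<Rightarrow> real \<times> real \<Rightarrow> complex^2^2" where
  "A_zbar Ax Ay p = (1/2) *\<^sub>R (Ax p + cscaleM \<i> (Ay p))"

end

theory Submission
  imports Defs "HOL-Computational_Algebra.Polynomial"
begin

text \<open>
  Insert the Fourier expansion of b into X b + A b = 0 at a fixed point p. The coefficients
  of X and A are linear in cos \<theta> and sin \<theta>, which shift frequencies by \<plusminus>1, so the
  left-hand side is a trigonometric polynomial in \<theta> whose lowest frequency -N-1 receives a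
  contribution from b_{-N} only. That coefficient vanishes, and in isothermal coordinates
  it is, up to a positive factor, the \<partial>-bar_A derivative of e^{-N\<lambda>} h \<xi>.
\<close>

lemma infinite_range_exp_imaginary: "infinite (range (\<lambda>t::real. exp (\<i> * of_real t)))"
proof
  assume "finite (range (\<lambda>t::real. exp (\<i> * of_real t)))"
  moreover have "inj_on (\<lambda>t::real. exp (\<i> * of_real t)) {-pi<..pi}"
    by (rule inj_on_inverseI[of _ Arg]) (simp add: Arg_cis flip: cis_conv_exp)
  ultimately have "finite {-pi<..pi}"
    by (meson finite_imageD finite_subset image_subsetI rangeI)
  then show False using infinite_Ioc[of "-pi" pi] by simp
qed

lemma trig_sum_isolated_coeff_eq_0:
  fixes f :: "'a \<Rightarrow> int" and c :: "'a \<Rightarrow> complex"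
  assumes "finite K"
    and vanish: "\<And>t::real. (\<Sum>k\<in>K. exp (\<i> * of_int (f k) * of_real t) * c k) = 0"
    and "k0 \<in> K" and isolated: "\<And>k. k \<in> K \<Longrightarrow> f k = f k0 \<Longrightarrow> k = k0"
  shows "c k0 = 0"
proof -
  define m where "m = (\<Sum>k\<in>K. \<bar>f k\<bar>)"
  have shift_nonneg: "0 \<le> f k + m" if "k \<in> K" for k
    using member_le_sum[OF that, of "\<lambda>k. \<bar>f k\<bar>"] \<open>finite K\<close> unfolding m_def by auto
  define P where "P = (\<Sum>k\<in>K. monom (c k) (nat (f k + m)))"
  have "poly P (exp (\<i> * of_real t)) = exp (\<i> * of_int m * of_real t) *
          (\<Sum>k\<in>K. exp (\<i> * of_int (f k) * of_real t) * c k)" for t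
  proof -
    have "exp (\<i> * of_real t) ^ nat (f k + m) = exp (\<i> * of_int m * of_real t) * exp (\<i> * of_int (f k) * of_real t)"
      if "k \<in> K" for k
      using shift_nonneg[OF that] by (simp add: exp_of_nat_mult[symmetric] exp_add[symmetric] algebra_simps)
    then show ?thesis
      by (simp add: P_def poly_sum poly_monom sum_distrib_left algebra_simps cong: sum.cong)
  qed
  then have "{z. \<exists>t::real. z = exp (\<i> * of_real t)} \<subseteq> {z. poly P z = 0}"
    using vanish by auto
  then have "P = 0"
    using infinite_range_exp_imaginary poly_roots_finite finite_subset
    by (metis full_SetCompr_eq)
  have "coeff P (nat (f k0 + m)) = (\<Sum>k\<in>K. if k = k0 then c k else 0)"
    unfolding P_def coeff_sum coeff_monom
    by (rule sum.cong) (use isolated shift_nonneg \<open>k0 \<in> K\<close> in \<open>auto simp: eq_nat_nat_iff\<close>)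
  with \<open>P = 0\<close> \<open>k0 \<in> K\<close> \<open>finite K\<close> show ?thesis by simp
qed

lemma cos_sin_mode_eq_exp_sum:
  fixes a b :: complex and k :: int and t :: real
  shows "exp (\<i> * of_int k * of_real t) * (of_real (cos t) * a + of_real (sin t) * b) =
    (\<Sum>s\<in>{1, -1}. exp (\<i> * of_int (k + s) * of_real t) * ((a - of_int s * \<i> * b) / 2))"
proof -
  define z where "z = exp (\<i> * of_real t)"
  define e where "e = exp (\<i> * of_int k * of_real t)"
  have "z \<noteq> 0" by (simp add: z_def)
  have cos: "of_real (cos t) = (z + inverse z) / 2"
    using cos_exp_eq[of "of_real t"] by (simp add: cos_of_real z_def exp_minus)
  have sin: "of_real (sin t) = (z - inverse z) / (2 * \<i>)"
    using sin_exp_eq[of "of_real t"] by (simp add: sin_of_real z_def exp_minus)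
  have up: "exp (\<i> * of_int (k + 1) * of_real t) = e * z"
    and down: "exp (\<i> * of_int (k + - 1) * of_real t) = e * inverse z"
    by (simp_all add: e_def z_def exp_add[symmetric] exp_minus[symmetric] algebra_simps)
  have sum_pm: "(\<Sum>s\<in>{1, -1::int}. f s) = f 1 + f (- 1)" for f :: "int \<Rightarrow> complex"
    by simp
  show ?thesis
    unfolding sum_pm cos sin up down e_def[symmetric]
    by (simp add: divide_simps \<open>z \<noteq> 0\<close>) (simp add: algebra_simps)
qed

text \<open>Restricted to complex numbers so that simp leaves scalings of vectors and matrices alone.\<close>
lemma scaleR_complex: "r *\<^sub>R (z::complex) = of_real r * z"
  by (fact scaleR_conv_of_real)

lemma cscaleM_component [simp]: "cscaleM c M $ i $ j = c * M $ i $ j"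
  by (simp add: cscaleM_def)

lemma cscaleM_zero_left [simp]: "cscaleM 0 M = 0"
  and cscaleM_zero_right [simp]: "cscaleM c 0 = 0"
  by (simp_all add: vec_eq_iff)

lemma bounded_bilinear_cscaleM: "bounded_bilinear (cscaleM :: complex \<Rightarrow> complex^'n^'m \<Rightarrow> _)"
  unfolding bilinear_conv_bounded_bilinear[symmetric] bilinear_def
  by (auto intro!: linearI simp: vec_eq_iff algebra_simps)

lemma trig_sum_isolated_coeff_eq_0_matrix:
  fixes f :: "'a \<Rightarrow> int" and c :: "'a \<Rightarrow> complex^'n^'m"
  assumes "finite K"
    and vanish: "\<And>t::real. (\<Sum>k\<in>K. cscaleM (exp (\<i> * of_int (f k) * of_real t)) (c k)) = 0"
    and "k0 \<in> K" and "\<And>k. k \<in> K \<Longrightarrow> f k = f k0 \<Longrightarrow> k = k0"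
  shows "c k0 = 0"
proof -
  have "c k0 $ i $ j = 0" for i j
  proof (rule trig_sum_isolated_coeff_eq_0[where K = K and f = f])
    fix t :: real
    show "(\<Sum>k\<in>K. exp (\<i> * of_int (f k) * of_real t) * c k $ i $ j) = 0"
      using arg_cong[OF vanish[of t], of "\<lambda>M. M $ i $ j"] by simp
  qed (use assms in auto)
  then show ?thesis by (simp add: vec_eq_iff)
qed

lemma lowest_mode_of_cos_sin_series_eq_0:
  fixes \<alpha> \<beta> :: "int \<Rightarrow> complex^'n^'m"
  assumes "finite K" and "k0 \<in> K" and "\<And>k. k \<in> K \<Longrightarrow> k0 \<le> k"
    and vanish: "\<And>t::real. (\<Sum>k\<in>K. cscaleM (exp (\<i> * of_int k * of_real t)) (cos t *\<^sub>R \<alpha> k + sin t *\<^sub>R \<beta> k)) = 0"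
  shows "\<alpha> k0 + cscaleM \<i> (\<beta> k0) = 0"
proof -
  \<comment> \<open>the coefficient of frequency k + s; frequency k0 - 1 only occurs for (k0, -1)\<close>
  define c where "c = (\<lambda>(k, s). cscaleM (1/2) (\<alpha> k - cscaleM (of_int s * \<i>) (\<beta> k)))"
  have shifted_vanish: "(\<Sum>ks\<in>K \<times> {1, -1}. cscaleM (exp (\<i> * of_int (fst ks + snd ks) * of_real t)) (c ks)) = 0" for t :: real
  proof -
    have "cscaleM (exp (\<i> * of_int k * of_real t)) (cos t *\<^sub>R \<alpha> k + sin t *\<^sub>R \<beta> k) =
          (\<Sum>s\<in>{1, -1}. cscaleM (exp (\<i> * of_int (k + s) * of_real t)) (c (k, s)))" for k
    proof (rule iffD2[OF vec_eq_iff], intro allI iffD2[OF vec_eq_iff])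
      fix i j
      have "(cos t *\<^sub>R \<alpha> k + sin t *\<^sub>R \<beta> k) $ i $ j = of_real (cos t) * \<alpha> k $ i $ j + of_real (sin t) * \<beta> k $ i $ j"
        by (simp add: scaleR_complex)
      moreover have "c (k, s) $ i $ j = (\<alpha> k $ i $ j - of_int s * \<i> * \<beta> k $ i $ j) / 2" for s
        by (simp add: c_def)
      ultimately show "cscaleM (exp (\<i> * of_int k * of_real t)) (cos t *\<^sub>R \<alpha> k + sin t *\<^sub>R \<beta> k) $ i $ j =
          (\<Sum>s\<in>{1, -1}. cscaleM (exp (\<i> * of_int (k + s) * of_real t)) (c (k, s))) $ i $ j"
        by (simp only: cscaleM_component sum_component cos_sin_mode_eq_exp_sum)
    qed
    moreover have "(\<Sum>ks\<in>K \<times> {1, -1}. F ks) = (\<Sum>k\<in>K. \<Sum>s\<in>{1, -1}. F (k, s))"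
      for F :: "int \<times> int \<Rightarrow> complex^'n^'m"
      by (simp only: sum.cartesian_product case_prod_eta)
    ultimately show ?thesis
      using vanish[of t] by simp
  qed
  have "c (k0, -1) = 0"
  proof (rule trig_sum_isolated_coeff_eq_0_matrix[OF _ shifted_vanish])
    show "finite (K \<times> {1, -1})" and "(k0, -1) \<in> K \<times> {1, -1}"
      using assms(1,2) by auto
    fix ks assume "ks \<in> K \<times> {1, -1}" and "fst ks + snd ks = fst (k0, -1) + snd (k0, - 1::int)"
    then show "ks = (k0, -1)"
      using assms(3)[of "fst ks"] by (cases ks) auto
  qed
  then show ?thesis by (simp add: c_def vec_eq_iff)
qed

lemma matrix_add_rdistrib: "(A + B) ** C = A ** C + B ** (C :: 'a::semiring_1^'p^'n)"
  by (simp add: matrix_matrix_mult_def vec_eq_iff distrib_right sum.distrib)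

lemma matrix_mult_scaleR_left: "(r *\<^sub>R A) ** M = r *\<^sub>R (A ** M :: complex^'p^'m)"
  by (simp add: vec_eq_iff matrix_matrix_mult_def scaleR_complex sum_distrib_left algebra_simps)

lemma matrix_mult_sum_right: "A ** (\<Sum>k\<in>K. M k) = (\<Sum>k\<in>K. A ** M k)"
  by (induction K rule: infinite_finite_induct) (simp_all add: matrix_add_ldistrib)

lemma bounded_linear_matrix_vector_mult_left:
  "bounded_linear (\<lambda>M::complex^'n^'m. M *v \<xi>)"
proof -
  have "linear (\<lambda>M::complex^'n^'m. M *v \<xi>)"
    by (rule linearI) (simp_all add: matrix_vector_mult_def vec_eq_iff scaleR_complex sum.distrib sum_distrib_left algebra_simps)
  then show ?thesis by (rule linear_conv_bounded_linear[THEN iffD1])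
qed

lemma smooth_on_imp_differentiable:
  assumes "open S" and "smooth_on S f" and "x \<in> S"
  shows "f differentiable (at x)"
proof -
  obtain F where F: "\<forall>x\<in>S. F [] x = f x"
    "\<forall>ds. \<forall>x\<in>S. (F ds has_derivative (\<lambda>v. \<Sum>i\<in>Basis. (v \<bullet> i) *\<^sub>R F (i # ds) x)) (at x)"
    using assms(2) unfolding smooth_on_def by blast
  have "(f has_derivative (\<lambda>v. \<Sum>i\<in>Basis. (v \<bullet> i) *\<^sub>R F [i] x)) (at x)"
    by (rule has_derivative_transform_within_open[of "F []", OF _ assms(1,3)]) (use F assms(3) in auto)
  then show ?thesis unfolding differentiable_def by blast
qed

lemma has_derivative_exp_imaginary:
  "((\<lambda>\<theta>::real. exp (\<i> * of_int k * of_real \<theta>)) has_derivative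
     (\<lambda>d. of_real d * (\<i> * of_int k * exp (\<i> * of_int k * of_real \<theta>)))) (at \<theta>)"
proof -
  have "((\<lambda>\<theta>::real. \<i> * of_int k * of_real \<theta>) has_derivative (\<lambda>d. \<i> * of_int k * of_real d)) (at \<theta>)"
    by (intro derivative_intros)
  from has_derivative_compose[OF this DERIV_exp[unfolded has_field_derivative_def]]
  show ?thesis by (simp add: algebra_simps)
qed

lemma has_derivative_fourier_sum:
  fixes h :: "int \<Rightarrow> 'a::euclidean_space \<Rightarrow> complex^'n^'m"
  assumes "\<And>k. k \<in> K \<Longrightarrow> (h k has_derivative L k) (at x)"
  shows "((\<lambda>q. \<Sum>k\<in>K. cscaleM (exp (\<i> * of_int k * of_real (snd q))) (h k (fst q))) has_derivative
          (\<lambda>d. \<Sum>k\<in>K. cscaleM (exp (\<i> * of_int k * of_real \<theta>)) (L k (fst d))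
               + cscaleM (of_real (snd d) * (\<i> * of_int k * exp (\<i> * of_int k * of_real \<theta>))) (h k x)))
         (at (x, \<theta>))"
proof (rule has_derivative_sum)
  fix k assume "k \<in> K"
  have "(h k has_derivative L k) (at (fst (x, \<theta>)))"
    using assms[OF \<open>k \<in> K\<close>] by simp
  from has_derivative_compose[OF has_derivative_fst[OF has_derivative_ident] this]
  have "((\<lambda>q. h k (fst q)) has_derivative (\<lambda>d. L k (fst d))) (at (x, \<theta>))"
    by simp
  moreover have "((\<lambda>\<theta>. exp (\<i> * of_int k * of_real \<theta>)) has_derivative
      (\<lambda>d. of_real d * (\<i> * of_int k * exp (\<i> * of_int k * of_real \<theta>)))) (at (snd (x, \<theta>)))"
    using has_derivative_exp_imaginary by simp
  from has_derivative_compose[OF has_derivative_snd[OF has_derivative_ident] this]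
  have "((\<lambda>q. exp (\<i> * of_int k * of_real (snd q))) has_derivative
      (\<lambda>d. of_real (snd d) * (\<i> * of_int k * exp (\<i> * of_int k * of_real \<theta>)))) (at (x, \<theta>))"
    by simp
  ultimately show "((\<lambda>q. cscaleM (exp (\<i> * of_int k * of_real (snd q))) (h k (fst q))) has_derivative
      (\<lambda>d. cscaleM (exp (\<i> * of_int k * of_real \<theta>)) (L k (fst d))
           + cscaleM (of_real (snd d) * (\<i> * of_int k * exp (\<i> * of_int k * of_real \<theta>))) (h k x)))
      (at (x, \<theta>))"
    using bounded_bilinear.FDERIV[OF bounded_bilinear_cscaleM] by fastforce
qed

lemma fourier_series_partials:
  fixes b :: "(real \<times> real) \<times> real \<Rightarrow> complex^'n^'m" and bk :: "int \<Rightarrow> real \<times> real \<Rightarrow> complex^'n^'m"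
  assumes "open U" and "p \<in> U"
    and expansion: "\<And>p' \<theta>. p' \<in> U \<Longrightarrow> b (p', \<theta>) = (\<Sum>k\<in>K. cscaleM (exp (\<i> * of_int k * of_real \<theta>)) (bk k p'))"
    and differentiable: "\<And>k. k \<in> K \<Longrightarrow> bk k differentiable (at p)"
  shows "pdX b (p, t) = (\<Sum>k\<in>K. cscaleM (exp (\<i> * of_int k * of_real t)) (pdx (bk k) p))"
    and "pdY b (p, t) = (\<Sum>k\<in>K. cscaleM (exp (\<i> * of_int k * of_real t)) (pdy (bk k) p))"
    and "pdTheta b (p, t) = (\<Sum>k\<in>K. cscaleM (\<i> * of_int k * exp (\<i> * of_int k * of_real t)) (bk k p))"
proof -
  define L where "L k = frechet_derivative (bk k) (at p)" for k
  have L: "(bk k has_derivative L k) (at p)" if "k \<in> K" for k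
    using differentiable[OF that] by (simp add: L_def frechet_derivative_works)
  have "(b has_derivative (\<lambda>d. \<Sum>k\<in>K. cscaleM (exp (\<i> * of_int k * of_real t)) (L k (fst d))
               + cscaleM (of_real (snd d) * (\<i> * of_int k * exp (\<i> * of_int k * of_real t))) (bk k p)))
         (at (p, t))"
    by (rule has_derivative_transform_within_open[OF has_derivative_fourier_sum[OF L] open_Times[OF \<open>open U\<close> open_UNIV]])
       (use \<open>p \<in> U\<close> expansion in auto)
  then have D: "frechet_derivative b (at (p, t)) = (\<lambda>d. \<Sum>k\<in>K. cscaleM (exp (\<i> * of_int k * of_real t)) (L k (fst d))
               + cscaleM (of_real (snd d) * (\<i> * of_int k * exp (\<i> * of_int k * of_real t))) (bk k p))"
    by (rule frechet_derivative_at[symmetric])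
  have L0: "L k (0, 0) = 0" if "k \<in> K" for k
    using linear_0[OF has_derivative_linear[OF L[OF that]]] by (simp add: zero_prod_def)
  show "pdX b (p, t) = (\<Sum>k\<in>K. cscaleM (exp (\<i> * of_int k * of_real t)) (pdx (bk k) p))"
    and "pdY b (p, t) = (\<Sum>k\<in>K. cscaleM (exp (\<i> * of_int k * of_real t)) (pdy (bk k) p))"
    by (simp_all add: pdX_def pdY_def pdx_def pdy_def D L_def)
  show "pdTheta b (p, t) = (\<Sum>k\<in>K. cscaleM (\<i> * of_int k * exp (\<i> * of_int k * of_real t)) (bk k p))"
    by (simp add: pdTheta_def D L0 cong: sum.cong)
qed

lemma dbar_exp_weighted:
  fixes h :: "real \<times> real \<Rightarrow> complex^'n^'m" and lam :: "real \<times> real \<Rightarrow> real"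
  assumes "h differentiable (at p)" and "lam differentiable (at p)"
  shows "dbar (\<lambda>p'. exp (c * lam p') *\<^sub>R (h p' *v \<xi>)) p =
    exp (c * lam p) *\<^sub>R (cscaleM (1/2) (pdx h p + cscaleM \<i> (pdy h p)
      + cscaleM (of_real c * (of_real (pdx lam p) + \<i> * of_real (pdy lam p))) (h p)) *v \<xi>)"
proof -
  define Dh where "Dh = frechet_derivative h (at p)"
  define Dl where "Dl = frechet_derivative lam (at p)"
  have "(h has_derivative Dh) (at p)" and "(lam has_derivative Dl) (at p)"
    using assms by (simp_all add: Dh_def Dl_def frechet_derivative_works)
  then have "((\<lambda>p'. exp (c * lam p') *\<^sub>R (h p' *v \<xi>)) has_derivative
      (\<lambda>v. exp (c * lam p) *\<^sub>R (Dh v *v \<xi>) + (exp (c * lam p) * (c * Dl v)) *\<^sub>R (h p *v \<xi>))) (at p)"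
    by (auto intro!: derivative_eq_intros bounded_linear.has_derivative[OF bounded_linear_matrix_vector_mult_left])
  then have D: "frechet_derivative (\<lambda>p'. exp (c * lam p') *\<^sub>R (h p' *v \<xi>)) (at p) =
      (\<lambda>v. exp (c * lam p) *\<^sub>R (Dh v *v \<xi>) + (exp (c * lam p) * (c * Dl v)) *\<^sub>R (h p *v \<xi>))"
    by (rule frechet_derivative_at[symmetric])
  show ?thesis
    unfolding dbar_def pdx_def pdy_def D Dh_def[symmetric] Dl_def[symmetric]
    by (simp add: vec_eq_iff cscale_def matrix_vector_mult_def scaleR_complex sum_distrib_left sum.distrib algebra_simps)
qed

lemma transport_fourier_modes:
  fixes b :: "(real \<times> real) \<times> real \<Rightarrow> complex^2^2" and bk :: "int \<Rightarrow> real \<times> real \<Rightarrow> complex^2^2"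
  assumes "open U" and "p \<in> U"
    and expansion: "\<And>p' \<theta>. p' \<in> U \<Longrightarrow> b (p', \<theta>) = (\<Sum>k\<in>K. cscaleM (exp (\<i> * of_int k * of_real \<theta>)) (bk k p'))"
    and differentiable: "\<And>k. k \<in> K \<Longrightarrow> bk k differentiable (at p)"
    and transport: "geoX lam b (p, t) + A_SM lam Ax Ay (p, t) ** b (p, t) = 0"
  shows "(\<Sum>k\<in>K. cscaleM (exp (\<i> * of_int k * of_real t))
           (cos t *\<^sub>R (pdx (bk k) p + Ax p ** bk k p + cscaleM (\<i> * of_int k * of_real (pdy lam p)) (bk k p))
          + sin t *\<^sub>R (pdy (bk k) p + Ay p ** bk k p - cscaleM (\<i> * of_int k * of_real (pdx lam p)) (bk k p)))) = 0"
    (is "(\<Sum>k\<in>K. ?mode k) = 0")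
proof -
  let ?E = "\<lambda>k. exp (\<i> * of_int k * of_real t)"
  have mode: "?mode k = cos t *\<^sub>R cscaleM (?E k) (pdx (bk k) p) + sin t *\<^sub>R cscaleM (?E k) (pdy (bk k) p)
      + (- pdx lam p * sin t + pdy lam p * cos t) *\<^sub>R cscaleM (\<i> * of_int k * ?E k) (bk k p)
      + (cos t *\<^sub>R Ax p + sin t *\<^sub>R Ay p) ** cscaleM (?E k) (bk k p)" for k
    by (simp add: vec_eq_iff matrix_matrix_mult_def scaleR_complex sum_distrib_left
        sum.distrib algebra_simps)
  have "exp (- lam p) *\<^sub>R (\<Sum>k\<in>K. ?mode k) = geoX lam b (p, t) + A_SM lam Ax Ay (p, t) ** b (p, t)"
    unfolding mode geoX_def A_SM_def
    by (simp add: fourier_series_partials[OF assms(1-4)] expansion[OF \<open>p \<in> U\<close>]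
        sum.distrib scaleR_sum_right matrix_mult_sum_right matrix_mult_scaleR_left matrix_add_rdistrib scaleR_add_right)
  with transport show ?thesis by simp
qed

theorem lemma5p1:
  fixes U :: "(real \<times> real) set"
    and lam :: "real \<times> real \<Rightarrow> real"
    and Ax Ay :: "real \<times> real \<Rightarrow> complex^2^2"
    and b :: "(real \<times> real) \<times> real \<Rightarrow> complex^2^2"
    and bk :: "int \<Rightarrow> real \<times> real \<Rightarrow> complex^2^2"
    and N :: nat
    and \<xi> :: "complex^2"
  assumes U_open: "open U"
    and lam_smooth: "smooth_on U lam"
    and Ax_smooth: "smooth_on U Ax" and Ay_smooth: "smooth_on U Ay"
    and A_su2: "\<forall>p\<in>U. Ax p \<in> su2 \<and> Ay p \<in> su2"
    and b_smooth: "smooth_on (U \<times> UNIV) b"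
    and b_SU2: "\<forall>q\<in>U \<times> UNIV. b q \<in> SU2"
    and bk_smooth: "\<forall>k. smooth_on U (bk k)"
    and N_ge: "N \<ge> 1"
    and b_fourier: "\<forall>p\<in>U. \<forall>\<theta>. b (p, \<theta>) =
                    (\<Sum>k\<in>{- int N..int N}. cscaleM (exp (\<i> * of_int k * of_real \<theta>)) (bk k p))"
    and bN_nonzero: "\<exists>p\<in>U. bk (- int N) p \<noteq> 0"
    and transport: "\<forall>q\<in>U \<times> UNIV. geoX lam b q + A_SM lam Ax Ay q ** b q = 0"
  shows "\<forall>p\<in>U. dbar (\<lambda>p'. exp (- real N * lam p') *\<^sub>R (bk (- int N) p' *v \<xi>)) p
                 + A_zbar Ax Ay p *v (exp (- real N * lam p) *\<^sub>R (bk (- int N) p *v \<xi>)) = 0"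
proof
  fix p assume "p \<in> U"
  define \<alpha> where "\<alpha> k = pdx (bk k) p + Ax p ** bk k p + cscaleM (\<i> * of_int k * of_real (pdy lam p)) (bk k p)" for k
  define \<beta> where "\<beta> k = pdy (bk k) p + Ay p ** bk k p - cscaleM (\<i> * of_int k * of_real (pdx lam p)) (bk k p)" for k
  have bk_differentiable: "bk k differentiable (at p)" for k
    using smooth_on_imp_differentiable[OF U_open bk_smooth[rule_format] \<open>p \<in> U\<close>] .
  have "(\<Sum>k\<in>{- int N..int N}. cscaleM (exp (\<i> * of_int k * of_real t)) (cos t *\<^sub>R \<alpha> k + sin t *\<^sub>R \<beta> k)) = 0"
    for t
    unfolding \<alpha>_def \<beta>_def
    by (rule transport_fourier_modes[OF U_open \<open>p \<in> U\<close> _ bk_differentiable])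
       (use b_fourier transport \<open>p \<in> U\<close> in auto)
  then have lowest_mode: "\<alpha> (- int N) + cscaleM \<i> (\<beta> (- int N)) = 0"
    by (rule lowest_mode_of_cos_sin_series_eq_0[rotated 3]) auto
  have "cscaleM (1/2) (\<alpha> (- int N) + cscaleM \<i> (\<beta> (- int N))) =
      cscaleM (1/2) (pdx (bk (- int N)) p + cscaleM \<i> (pdy (bk (- int N)) p)
        + cscaleM (of_real (- real N) * (of_real (pdx lam p) + \<i> * of_real (pdy lam p))) (bk (- int N) p))
      + A_zbar Ax Ay p ** bk (- int N) p"
    by (simp add: \<alpha>_def \<beta>_def A_zbar_def vec_eq_iff matrix_matrix_mult_def
        scaleR_complex sum_distrib_left sum.distrib algebra_simps)
  then have "dbar (\<lambda>p'. exp (- real N * lam p') *\<^sub>R (bk (- int N) p' *v \<xi>)) p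
          + A_zbar Ax Ay p *v (exp (- real N * lam p) *\<^sub>R (bk (- int N) p *v \<xi>))
        = exp (- real N * lam p) *\<^sub>R (cscaleM (1/2) (\<alpha> (- int N) + cscaleM \<i> (\<beta> (- int N))) *v \<xi>)"
    unfolding dbar_exp_weighted[OF bk_differentiable smooth_on_imp_differentiable[OF U_open lam_smooth \<open>p \<in> U\<close>]]
    by (simp add: matrix_vector_mult_add_rdistrib matrix_vector_mul_assoc linear.scaleR[OF matrix_vector_mul_linear] scaleR_add_right)
  with lowest_mode show "dbar (\<lambda>p'. exp (- real N * lam p') *\<^sub>R (bk (- int N) p' *v \<xi>)) p
          + A_zbar Ax Ay p *v (exp (- real N * lam p) *\<^sub>R (bk (- int N) p *v \<xi>)) = 0"
    by simp
qed

end
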